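(* Let $H$ be a digraph (possibly with loops) and let $D$ be an $H$-colored transitive digraph. If $k \geq 2$, then $D$ has a $(k,H)$-kernel.
   Context: All digraphs are finite. A digraph $D$ is transitive if for all distinct $u,v\in V(D)$, whenever there is a directed $uv$-path of length $2$, the arc $(u,v)$ belongs to $A(D)$. $D$ has no loops and comes with a map $\rho: A(D)\to V(H)$. For a walk $W=(x_0,\ldots,x_n)$ in $D$, there is an obstruction on $x_i$ if $(\rho(x_{i-1},x_i),\rho(x_i,x_{i+1})) \notin A(H)$; for an open walk this is considered at internal vertices $x_i$, $1\le i\le n-1$, for a closed walk at all $i\in\{0,\ldots,n-1\}$ with indices modulo $n$. $O_H(W)$ is the set of indices with an obstruction; the $H$-length is $l_H(W)=|O_H(W)|+1$ for open $W$ and $|O_H(W)|$ for closed $W$. A $(k,H)$-kernel ($k\ge2$) is a set $S\subseteq V(D)$ such that for every two distinct $u,v\in S$ every directed $uv$-path in $D$ has $H$-length at least $k$, and for every $x\in V(D)\setminus S$ there is a directed path from $x$ to a vertex of $S$ of $H$-length at most $k-1$. *)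

theory Defs
  imports Main
begin

definition digraph :: "'a set \<Rightarrow> ('a \<times> 'a) set \<Rightarrow> bool" where
  "digraph V A \<longleftrightarrow> finite V \<and> A \<subseteq> V \<times> V"

definition loopless :: "('a \<times> 'a) set \<Rightarrow> bool" where
  "loopless A \<longleftrightarrow> (\<forall>x. (x, x) \<notin> A)"

definition H_colored :: "'a set \<Rightarrow> ('a \<times> 'a) set \<Rightarrow> 'c set \<Rightarrow> ('a \<times> 'a \<Rightarrow> 'c) \<Rightarrow> bool" where
  "H_colored V A VH \<rho> \<longleftrightarrow> digraph V A \<and> loopless A \<and> (\<forall>a\<in>A. \<rho> a \<in> VH)"

definition is_walk :: "('a \<times> 'a) set \<Rightarrow> 'a list \<Rightarrow> bool" where
  "is_walk A xs \<longleftrightarrow> xs \<noteq> [] \<and> (\<forall>i. i + 1 < length xs \<longrightarrow> (xs ! i, xs ! (i + 1)) \<in> A)"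

definition is_path :: "('a \<times> 'a) set \<Rightarrow> 'a \<Rightarrow> 'a \<Rightarrow> 'a list \<Rightarrow> bool" where
  "is_path A u v xs \<longleftrightarrow> is_walk A xs \<and> distinct xs \<and> hd xs = u \<and> last xs = v"

definition transitive_digraph :: "('a \<times> 'a) set \<Rightarrow> bool" where
  "transitive_digraph A \<longleftrightarrow>
     (\<forall>u v w. u \<noteq> v \<longrightarrow> (u, w) \<in> A \<longrightarrow> (w, v) \<in> A \<longrightarrow> (u, v) \<in> A)"

definition obstructions :: "('c \<times> 'c) set \<Rightarrow> ('a \<times> 'a \<Rightarrow> 'c) \<Rightarrow> 'a list \<Rightarrow> nat set" where
  "obstructions AH \<rho> xs =
     {i. 1 \<le> i \<and> i + 1 < length xs \<and>
         (\<rho> (xs ! (i - 1), xs ! i), \<rho> (xs ! i, xs ! (i + 1))) \<notin> AH}"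

definition H_length :: "('c \<times> 'c) set \<Rightarrow> ('a \<times> 'a \<Rightarrow> 'c) \<Rightarrow> 'a list \<Rightarrow> nat" where
  "H_length AH \<rho> xs = card (obstructions AH \<rho> xs) + 1"

definition kH_kernel ::
  "'a set \<Rightarrow> ('a \<times> 'a) set \<Rightarrow> ('c \<times> 'c) set \<Rightarrow> ('a \<times> 'a \<Rightarrow> 'c) \<Rightarrow> nat \<Rightarrow> 'a set \<Rightarrow> bool" where
  "kH_kernel V A AH \<rho> k S \<longleftrightarrow>
     S \<subseteq> V \<and>
     (\<forall>u\<in>S. \<forall>v\<in>S. u \<noteq> v \<longrightarrow> (\<forall>xs. is_path A u v xs \<longrightarrow> H_length AH \<rho> xs \<ge> k)) \<and>
     (\<forall>x\<in>V - S. \<exists>v\<in>S. \<exists>xs. is_path A x v xs \<and> H_length AH \<rho> xs \<le> k - 1)"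

end

theory Submission
  imports Defs
begin

text \<open>In a transitive digraph every directed path between distinct vertices can be
  shortcut to a single arc. Hence an independent set admits no paths at all between
  its distinct members, and an independent set absorbing every other vertex by one
  arc is a \<open>(k,H)\<close>-kernel for every \<open>k \<ge> 2\<close>, whatever the colouring. Such a kernel
  exists: following arcs that cannot be reversed strictly shrinks the out-neighbourhood,
  so every vertex reaches a terminal vertex (one whose arcs can all be reversed), and a
  maximal independent set of terminal vertices absorbs everything.\<close>

definition terminal :: "('a \<times> 'a) set \<Rightarrow> 'a \<Rightarrow> bool" where
  "terminal A x \<longleftrightarrow> (\<forall>y. (x, y) \<in> A \<longrightarrow> (y, x) \<in> A)"

definition independent :: "('a \<times> 'a) set \<Rightarrow> 'a set \<Rightarrow> bool" where
  "independent A S \<longleftrightarrow> (\<forall>u\<in>S. \<forall>v\<in>S. (u, v) \<notin> A)"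

definition kernel :: "'a set \<Rightarrow> ('a \<times> 'a) set \<Rightarrow> 'a set \<Rightarrow> bool" where
  "kernel V A S \<longleftrightarrow> S \<subseteq> V \<and> independent A S \<and> (\<forall>x\<in>V - S. \<exists>s\<in>S. (x, s) \<in> A)"

lemma is_walk_Cons_Cons:
  "is_walk A (a # b # zs) \<longleftrightarrow> (a, b) \<in> A \<and> is_walk A (b # zs)"
proof
  assume walk: "is_walk A (a # b # zs)"
  have "(a, b) \<in> A"
    using walk[unfolded is_walk_def, THEN conjunct2, rule_format, of 0] by simp
  moreover have "is_walk A (b # zs)"
    unfolding is_walk_def
  proof (intro conjI allI impI)
    fix i assume "i + 1 < length (b # zs)"
    then have "Suc i + 1 < length (a # b # zs)" by simp
    then show "((b # zs) ! i, (b # zs) ! (i + 1)) \<in> A"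
      using walk unfolding is_walk_def by fastforce
  qed simp
  ultimately show "(a, b) \<in> A \<and> is_walk A (b # zs)" ..
next
  assume arc_walk: "(a, b) \<in> A \<and> is_walk A (b # zs)"
  show "is_walk A (a # b # zs)"
    unfolding is_walk_def
  proof (intro conjI allI impI)
    fix i assume i: "i + 1 < length (a # b # zs)"
    show "((a # b # zs) ! i, (a # b # zs) ! (i + 1)) \<in> A"
    proof (cases i)
      case (Suc j)
      with i arc_walk show ?thesis unfolding is_walk_def by auto
    qed (use arc_walk in simp)
  qed simp
qed

lemma transitive_walk_arc:
  assumes "transitive_digraph A"
  shows "is_walk A (a # ys) \<Longrightarrow> distinct (a # ys) \<Longrightarrow> ys \<noteq> [] \<Longrightarrow> (a, last ys) \<in> A"
proof (induction ys arbitrary: a)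
  case (Cons b zs)
  have ab: "(a, b) \<in> A" and walk_b: "is_walk A (b # zs)"
    using Cons.prems(1) by (auto simp: is_walk_Cons_Cons)
  show ?case
  proof (cases "zs = []")
    case False
    have "(b, last zs) \<in> A" using Cons.IH[OF walk_b] Cons.prems(2) False by simp
    moreover have "a \<noteq> last zs" using Cons.prems(2) False by auto
    ultimately show ?thesis
      using ab assms False unfolding transitive_digraph_def by auto
  qed (use ab in simp)
qed simp

lemma transitive_path_arc:
  assumes "transitive_digraph A" and "is_path A u v xs" and "u \<noteq> v"
  shows "(u, v) \<in> A"
proof -
  obtain a ys where xs: "xs = a # ys"
    using assms(2) unfolding is_path_def is_walk_def by (cases xs) auto
  with assms(2,3) have "ys \<noteq> []" unfolding is_path_def by auto
  with assms(1,2) xs show ?thesis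
    using transitive_walk_arc unfolding is_path_def by fastforce
qed

lemma arc_is_path: "(x, y) \<in> A \<Longrightarrow> x \<noteq> y \<Longrightarrow> is_path A x y [x, y]"
  by (simp add: is_path_def is_walk_Cons_Cons) (simp add: is_walk_def)

lemma H_length_arc: "H_length AH \<rho> [x, y] = 1"
  by (simp add: H_length_def obstructions_def)

lemma kernel_is_kH_kernel:
  assumes "transitive_digraph A" and "kernel V A S" and "k \<ge> 2"
  shows "kH_kernel V A AH \<rho> k S"
  unfolding kH_kernel_def
proof (intro conjI ballI impI allI)
  show "S \<subseteq> V" using assms(2) unfolding kernel_def by simp
next
  fix u v xs assume "u \<in> S" "v \<in> S" "u \<noteq> v" "is_path A u v xs"
  have "(u, v) \<in> A" using transitive_path_arc[OF assms(1) \<open>is_path A u v xs\<close> \<open>u \<noteq> v\<close>] .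
  moreover have "(u, v) \<notin> A"
    using assms(2) \<open>u \<in> S\<close> \<open>v \<in> S\<close> unfolding kernel_def independent_def by blast
  ultimately show "k \<le> H_length AH \<rho> xs" by contradiction
next
  fix x assume "x \<in> V - S"
  then obtain s where "s \<in> S" "(x, s) \<in> A" "x \<noteq> s"
    using assms(2) unfolding kernel_def by blast
  moreover from calculation(2,3) have "is_path A x s [x, s]" by (rule arc_is_path)
  moreover have "H_length AH \<rho> [x, s] \<le> k - 1"
    using assms(3) by (simp add: H_length_arc)
  ultimately show "\<exists>v\<in>S. \<exists>xs. is_path A x v xs \<and> H_length AH \<rho> xs \<le> k - 1"
    by blast
qed

lemma transitive_Image_psubset:
  assumes "transitive_digraph A" and "loopless A"
    and "(x, y) \<in> A" and "(y, x) \<notin> A"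
  shows "A `` {y} \<subset> A `` {x}"
proof
  show "A `` {y} \<subseteq> A `` {x}"
  proof
    fix z assume "z \<in> A `` {y}"
    then have "(y, z) \<in> A" and "z \<noteq> x" using assms(4) by auto
    then show "z \<in> A `` {x}"
      using assms(1,3) unfolding transitive_digraph_def by auto
  qed
  have "y \<notin> A `` {y}" and "y \<in> A `` {x}"
    using assms(2,3) unfolding loopless_def by auto
  then show "A `` {y} \<noteq> A `` {x}" by metis
qed

lemma transitive_reaches_terminal:
  assumes "finite A" and "transitive_digraph A" and "loopless A"
  shows "\<exists>t. terminal A t \<and> (t = x \<or> (x, t) \<in> A)"
proof (induction "card (A `` {x})" arbitrary: x rule: less_induct)
  case less
  show ?case
  proof (cases "terminal A x")
    case False
    then obtain y where xy: "(x, y) \<in> A" and yx: "(y, x) \<notin> A"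
      unfolding terminal_def by blast
    have "finite (A `` {x})" using assms(1) by (simp add: finite_Image)
    then have "card (A `` {y}) < card (A `` {x})"
      using psubset_card_mono transitive_Image_psubset[OF assms(2,3) xy yx] by blast
    then obtain t where t: "terminal A t" "t = y \<or> (y, t) \<in> A"
      using less by blast
    have "x \<noteq> t" using t(2) xy yx by blast
    with t xy assms(2) show ?thesis unfolding transitive_digraph_def by blast
  qed blast
qed

lemma maximal_independent_terminal_absorbs:
  assumes "loopless A" and "T \<subseteq> Collect (terminal A)"
    and "S \<subseteq> T" and "independent A S"
    and maximal: "\<And>S'. S \<subseteq> S' \<Longrightarrow> S' \<subseteq> T \<Longrightarrow> independent A S' \<Longrightarrow> S' = S"
    and "t \<in> T" and "t \<notin> S"
  shows "\<exists>s\<in>S. (t, s) \<in> A"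
proof -
  have "\<not> independent A (insert t S)"
    using maximal[of "insert t S"] assms(3,6,7) by blast
  then obtain u v where uv: "u \<in> insert t S" "v \<in> insert t S" "(u, v) \<in> A"
    using assms(4) unfolding independent_def by blast
  have "u \<noteq> v" using uv(3) assms(1) unfolding loopless_def by blast
  then consider "u = t" "v \<in> S" | "u \<in> S" "v = t"
    using uv assms(4) unfolding independent_def by blast
  then show ?thesis
  proof cases
    case 2
    then have "(t, u) \<in> A" using uv(3) assms(2,3) unfolding terminal_def by blast
    with 2 show ?thesis by blast
  qed (use uv in blast)
qed

lemma transitive_has_kernel:
  assumes "digraph V A" and "loopless A" and "transitive_digraph A"
  shows "\<exists>S. kernel V A S"
proof -
  define T where "T = {x \<in> V. terminal A x}"
  define candidates where "candidates = {S. S \<subseteq> T \<and> independent A S}"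
  have "finite V" and A_V: "A \<subseteq> V \<times> V" using assms(1) unfolding digraph_def by auto
  then have "finite A" by (meson finite_SigmaI finite_subset)
  have "candidates \<subseteq> Pow V" unfolding candidates_def T_def by blast
  then have "finite candidates" using \<open>finite V\<close> by (meson finite_Pow_iff finite_subset)
  moreover have "{} \<in> candidates" unfolding candidates_def independent_def by blast
  ultimately obtain S where "S \<in> candidates"
    and S_maximal: "\<And>S'. S' \<in> candidates \<Longrightarrow> S \<subseteq> S' \<Longrightarrow> S = S'"
    using finite_has_maximal[of candidates] by blast
  then have S: "S \<subseteq> T" "independent A S" unfolding candidates_def by auto
  have maximal: "S' = S" if "S \<subseteq> S'" "S' \<subseteq> T" "independent A S'" for S'
    using S_maximal[of S'] that unfolding candidates_def by blast
  have "T \<subseteq> Collect (terminal A)" unfolding T_def by blast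
  note absorbs_T = maximal_independent_terminal_absorbs[OF assms(2) this S maximal]
  have "\<exists>s\<in>S. (x, s) \<in> A" if x: "x \<in> V" "x \<notin> S" for x
  proof -
    obtain t where t: "terminal A t" "t = x \<or> (x, t) \<in> A"
      using transitive_reaches_terminal[OF \<open>finite A\<close> assms(3,2)] by blast
    with x A_V have "t \<in> T" unfolding T_def by blast
    show ?thesis
    proof (cases "t \<in> S")
      case False
      then obtain s where s: "s \<in> S" "(t, s) \<in> A" using absorbs_T \<open>t \<in> T\<close> by blast
      have "x \<noteq> s" using s(1) x(2) by blast
      with s t(2) assms(3) show ?thesis unfolding transitive_digraph_def by blast
    qed (use t x in blast)
  qed
  moreover have "S \<subseteq> V" using S(1) unfolding T_def by blast
  ultimately show ?thesis using S(2) unfolding kernel_def by blast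
qed

theorem corollary13:
  fixes V :: "'a set" and A :: "('a \<times> 'a) set"
    and VH :: "'c set" and AH :: "('c \<times> 'c) set"
    and \<rho> :: "'a \<times> 'a \<Rightarrow> 'c" and k :: nat
  assumes "digraph VH AH"
    and "H_colored V A VH \<rho>"
    and "transitive_digraph A"
    and "k \<ge> 2"
  shows "\<exists>S. kH_kernel V A AH \<rho> k S"
proof -
  have "digraph V A" and "loopless A" using assms(2) unfolding H_colored_def by auto
  then obtain S where "kernel V A S"
    using transitive_has_kernel assms(3) by blast
  then show ?thesis using kernel_is_kH_kernel assms(3,4) by blast
qed

end
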